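(* The normalizer of $\widehat{\operatorname{IET}^{+}_{\mathrm{rc}}}$ in $\widehat{\operatorname{IET}^{\bowtie}}$ is $\widehat{\operatorname{IET}^{+}_{\mathrm{rc}}}$.
   Context: $X=[0,1[$. $\widehat{\operatorname{IET}^{\bowtie}}$ is the group of bijections $f:X\to X$ for which there is a finite partition of $X$ into intervals $[a,b[$ such that on each open interval $]a,b[$, $f$ has the form $x\mapsto x+c$ or $x\mapsto -x+c$; $\widehat{\operatorname{IET}^{+}}$ is the subgroup of those for which only the form $x\mapsto x+c$ occurs, and $\widehat{\operatorname{IET}^{+}_{\mathrm{rc}}}$ is the subgroup of right-continuous elements of $\widehat{\operatorname{IET}^{+}}$. *)

theory Defs
  imports "HOL-Analysis.Analysis"
begin

text \<open>The unit interval X = [0,1[. Maps X to X are represented as functions real to real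
  that are the identity outside X, so that equality of maps is plain function equality.\<close>

definition IX :: "real set" where "IX = {0..<1}"

definition piecewise_isometric :: "bool \<Rightarrow> (real \<Rightarrow> real) \<Rightarrow> bool" where
  "piecewise_isometric flips f \<longleftrightarrow>
     (\<exists>(n::nat) (a::nat \<Rightarrow> real). a 0 = 0 \<and> a n = 1 \<and> (\<forall>i<n. a i < a (Suc i)) \<and>
        (\<forall>i<n. \<exists>c::real.
            (\<forall>x\<in>{a i<..<a (Suc i)}. f x = x + c) \<or>
            (flips \<and> (\<forall>x\<in>{a i<..<a (Suc i)}. f x = - x + c))))"

definition IET_bowtie :: "(real \<Rightarrow> real) set" where
  "IET_bowtie = {f. bij_betw f IX IX \<and> (\<forall>x. x \<notin> IX \<longrightarrow> f x = x) \<and> piecewise_isometric True f}"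

definition IET_plus :: "(real \<Rightarrow> real) set" where
  "IET_plus = {f. bij_betw f IX IX \<and> (\<forall>x. x \<notin> IX \<longrightarrow> f x = x) \<and> piecewise_isometric False f}"

definition IET_plus_rc :: "(real \<Rightarrow> real) set" where
  "IET_plus_rc = {f \<in> IET_plus. \<forall>x\<in>IX. continuous (at_right x) f}"

definition normalizer :: "(real \<Rightarrow> real) set \<Rightarrow> (real \<Rightarrow> real) set \<Rightarrow> (real \<Rightarrow> real) set" where
  "normalizer G H = {g \<in> G. (\<lambda>h. g \<circ> h \<circ> inv g) ` H = H}"

end

theory Submission
  imports Defs
begin

(*
  Call g a translation to the right of x if it is x' \<mapsto> x' + c on some [x, x + d[, and
  to the left of x if it is so on some ]x - d, x]. The elements of IET_plus_rc are exactly
  the bijections of X that are translations to the right of every point and to the left of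
  all but finitely many points; in this form closure under composition and inversion is
  immediate, so IET_plus_rc normalizes itself.

  Conversely, let g normalize IET_plus_rc and x \<in> X. For small L > 0 the exchange s of
  [g x, g x + L[ and [g x + L, g x + 2L[ lies in IET_plus_rc, hence so does g^-1 s g,
  which is therefore right-continuous at x. If g jumped at x from the right, or reversed
  orientation just to the right of x, then for a suitable L the image under g of a right
  neighbourhood of x would miss [g x, g x + 2L[; there g^-1 s g is the identity, while
  it moves x, contradicting right-continuity. So g is a translation to the right of every
  point, which forces every piece of g to be a translation and g to be right-continuous.
*)

definition right_translation_at :: "(real \<Rightarrow> real) \<Rightarrow> real \<Rightarrow> bool" where
  "right_translation_at f x \<longleftrightarrow> (\<exists>d>0. \<exists>c. \<forall>y\<in>{x..<x+d}. f y = y + c)"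

definition left_translation_at :: "(real \<Rightarrow> real) \<Rightarrow> real \<Rightarrow> bool" where
  "left_translation_at f x \<longleftrightarrow> (\<exists>d>0. \<exists>c. \<forall>y\<in>{x-d<..x}. f y = y + c)"

lemma right_translation_atI:
  assumes "x < b" and "\<forall>y\<in>{x..<b}. f y = y + c"
  shows "right_translation_at f x"
  using assms unfolding right_translation_at_def by (intro exI[of _ "b - x"]) auto

lemma left_translation_atI:
  assumes "a < x" and "\<forall>y\<in>{a<..x}. f y = y + c"
  shows "left_translation_at f x"
  using assms unfolding left_translation_at_def by (intro exI[of _ "x - a"]) auto

lemma right_translation_at_eventually:
  assumes "right_translation_at f x"
  shows "\<forall>\<^sub>F y in at_right x. f y = y + (f x - x)"
proof -
  obtain d c where "d > 0" and c: "\<forall>y\<in>{x..<x+d}. f y = y + c"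
    using assms unfolding right_translation_at_def by blast
  moreover have "f x = x + c" using c \<open>d > 0\<close> by simp
  ultimately show ?thesis
    unfolding eventually_at_right_field by (intro exI[of _ "x + d"]) auto
qed

lemma left_translation_at_eventually:
  assumes "left_translation_at f x"
  shows "\<forall>\<^sub>F y in at_left x. f y = y + (f x - x)"
proof -
  obtain d c where "d > 0" and c: "\<forall>y\<in>{x-d<..x}. f y = y + c"
    using assms unfolding left_translation_at_def by blast
  moreover have "f x = x + c" using c \<open>d > 0\<close> by simp
  ultimately show ?thesis
    unfolding eventually_at_left_field by (intro exI[of _ "x - d"]) auto
qed

lemma right_translation_at_imp_continuous:
  assumes "right_translation_at f x"
  shows "continuous (at_right x) f"
  unfolding continuous_within tendsto_cong[OF right_translation_at_eventually[OF assms]]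
  by (auto intro!: tendsto_eq_intros)

lemma right_continuous_eq_right_limit:
  fixes f h :: "real \<Rightarrow> real"
  assumes "continuous (at_right x) f" and "\<forall>\<^sub>F y in at_right x. f y = h y"
    and "(h \<longlongrightarrow> l) (at_right x)"
  shows "f x = l"
proof -
  have "(f \<longlongrightarrow> l) (at_right x)"
    using assms(3) by (subst tendsto_cong[OF assms(2)])
  with assms(1) show ?thesis
    unfolding continuous_within by (rule tendsto_unique[OF trivial_limit_at_right_real])
qed

lemma right_translation_at_comp:
  assumes "right_translation_at g x" and "right_translation_at f (g x)"
  shows "right_translation_at (f \<circ> g) x"
proof -
  obtain d1 c1 where "d1 > 0" and g: "\<forall>y\<in>{x..<x+d1}. g y = y + c1"
    using assms(1) unfolding right_translation_at_def by blast
  obtain d2 c2 where "d2 > 0" and f: "\<forall>z\<in>{g x..<g x+d2}. f z = z + c2"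
    using assms(2) unfolding right_translation_at_def by blast
  have "g x = x + c1" using g \<open>d1 > 0\<close> by simp
  then have "(f \<circ> g) y = y + (c1 + c2)" if "y \<in> {x..<x + min d1 d2}" for y
    using that f g by auto
  then show ?thesis
    using \<open>d1 > 0\<close> \<open>d2 > 0\<close> by (intro right_translation_atI[of x "x + min d1 d2"]) auto
qed

lemma left_translation_at_comp:
  assumes "left_translation_at g x" and "left_translation_at f (g x)"
  shows "left_translation_at (f \<circ> g) x"
proof -
  obtain d1 c1 where "d1 > 0" and g: "\<forall>y\<in>{x-d1<..x}. g y = y + c1"
    using assms(1) unfolding left_translation_at_def by blast
  obtain d2 c2 where "d2 > 0" and f: "\<forall>z\<in>{g x-d2<..g x}. f z = z + c2"
    using assms(2) unfolding left_translation_at_def by blast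
  have "g x = x + c1" using g \<open>d1 > 0\<close> by simp
  then have "(f \<circ> g) y = y + (c1 + c2)" if "y \<in> {x - min d1 d2<..x}" for y
    using that f g by auto
  then show ?thesis
    using \<open>d1 > 0\<close> \<open>d2 > 0\<close> by (intro left_translation_atI[of "x - min d1 d2" x]) auto
qed

lemma right_translation_at_inv:
  assumes "inj g" and "right_translation_at g x"
  shows "right_translation_at (inv g) (g x)"
proof -
  obtain d c where "d > 0" and g: "\<forall>y\<in>{x..<x+d}. g y = y + c"
    using assms(2) unfolding right_translation_at_def by blast
  have "g x = x + c" using g \<open>d > 0\<close> by simp
  then have "inv g z = z - c" if "z \<in> {g x..<g x + d}" for z
    using that g inv_f_f[OF assms(1), of "z - c"] by auto
  then show ?thesis using \<open>d > 0\<close> by (intro right_translation_atI[of "g x" "g x + d"]) auto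
qed

lemma left_translation_at_inv:
  assumes "inj g" and "left_translation_at g x"
  shows "left_translation_at (inv g) (g x)"
proof -
  obtain d c where "d > 0" and g: "\<forall>y\<in>{x-d<..x}. g y = y + c"
    using assms(2) unfolding left_translation_at_def by blast
  have "g x = x + c" using g \<open>d > 0\<close> by simp
  then have "inv g z = z - c" if "z \<in> {g x - d<..g x}" for z
    using that g inv_f_f[OF assms(1), of "z - c"] by auto
  then show ?thesis using \<open>d > 0\<close> by (intro left_translation_atI[of "g x - d" "g x"]) auto
qed

lemma translation_on_interval:
  assumes "\<forall>t\<in>{a<..<b}. right_translation_at f t \<and> left_translation_at f t" and "a < b"
  obtains c where "\<forall>y\<in>{a<..<b}. f y = y + c"
proof -
  define m where "m = (a + b) / 2"
  have m: "m \<in> {a<..<b}" using assms(2) by (simp add: m_def)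
  have "\<forall>\<^sub>F y in at t within {a<..<b}. f t - t = f y - y" if t: "t \<in> {a<..<b}" for t
  proof -
    have "right_translation_at f t" "left_translation_at f t" using assms(1) t by auto
    then have "\<forall>\<^sub>F y in at t. f y = y + (f t - t)"
      unfolding eventually_at_split
      by (intro conjI left_translation_at_eventually right_translation_at_eventually)
    then have "\<forall>\<^sub>F y in at t within {a<..<b}. f y = y + (f t - t)"
      by (rule filter_leD[OF at_le[OF subset_UNIV]])
    then show ?thesis by (rule eventually_mono) simp
  qed
  then have "f m - m = f y - y" if "y \<in> {a<..<b}" for y
    using connected_local_const[where f="\<lambda>y. f y - y", OF connected_Ioo m that] by blast
  then have "\<forall>y\<in>{a<..<b}. f y = y + (f m - m)" by force
  then show ?thesis by (rule that)
qed

lemma bij_if_bij_betw_IX: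
  assumes "bij_betw f IX IX" and "\<forall>x. x \<notin> IX \<longrightarrow> f x = x"
  shows "bij f"
proof -
  have "bij_betw f (- IX) (- IX)"
    using assms(2) bij_betw_cong[of "- IX" f id "- IX"] by simp
  from bij_betw_combine[OF assms(1) this] show ?thesis by simp
qed

lemma inv_bij_betw_IX:
  assumes "bij_betw f IX IX" and "\<forall>x. x \<notin> IX \<longrightarrow> f x = x"
  shows "bij_betw (inv f) IX IX" and "\<forall>x. x \<notin> IX \<longrightarrow> inv f x = x"
proof -
  have "bij f" using assms by (rule bij_if_bij_betw_IX)
  show "bij_betw (inv f) IX IX"
    using bij_betw_inv_into_subset[OF \<open>bij f\<close> subset_UNIV bij_betw_imp_surj_on[OF assms(1)]] .
  show "\<forall>x. x \<notin> IX \<longrightarrow> inv f x = x"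
    using assms(2) inv_f_f[OF bij_is_inj[OF \<open>bij f\<close>]] by metis
qed

lemma IET_plus_rcD:
  assumes "f \<in> IET_plus_rc"
  shows "bij_betw f IX IX" and "\<forall>x. x \<notin> IX \<longrightarrow> f x = x"
  using assms by (simp_all add: IET_plus_rc_def IET_plus_def)

definition unit_partition :: "nat \<Rightarrow> (nat \<Rightarrow> real) \<Rightarrow> bool" where
  "unit_partition n a \<longleftrightarrow> a 0 = 0 \<and> a n = 1 \<and> (\<forall>i<n. a i < a (Suc i))"

lemma piecewise_isometric_iff_unit_partition:
  "piecewise_isometric flips f \<longleftrightarrow>
    (\<exists>n a. unit_partition n a \<and> (\<forall>i<n. \<exists>c. (\<forall>x\<in>{a i<..<a (Suc i)}. f x = x + c) \<or>
        (flips \<and> (\<forall>x\<in>{a i<..<a (Suc i)}. f x = - x + c))))"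
  unfolding piecewise_isometric_def unit_partition_def by blast

lemma unit_partition_mono:
  assumes "unit_partition n a" and "i \<le> j" and "j \<le> n"
  shows "a i \<le> a j"
  using assms(2,3)
proof (induction j rule: dec_induct)
  case base
  then show ?case by simp
next
  case (step k)
  then have "a i \<le> a k" "a k < a (Suc k)" using assms(1) by (auto simp: unit_partition_def)
  then show ?case by simp
qed

lemma unit_partition_piece_subset:
  assumes "unit_partition n a" and "i < n"
  shows "{a i..<a (Suc i)} \<subseteq> IX"
  using unit_partition_mono[OF assms(1), of 0 i] unit_partition_mono[OF assms(1), of "Suc i" n] assms
  by (auto simp: unit_partition_def IX_def)

lemma unit_partition_find_piece:
  assumes "unit_partition n a" and "x \<in> IX"
  obtains i where "i < n" and "x \<in> {a i..<a (Suc i)}"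
proof -
  have "\<exists>i<m. x \<in> {a i..<a (Suc i)}" if "x < a m" for m
    using that
  proof (induction m)
    case 0
    then show ?case using assms by (simp add: unit_partition_def IX_def)
  next
    case (Suc m)
    show ?case
    proof (cases "x < a m")
      case True
      then show ?thesis using Suc.IH less_SucI by blast
    next
      case False
      then show ?thesis using Suc.prems by auto
    qed
  qed
  from this[of n] show ?thesis using assms that by (auto simp: unit_partition_def IX_def)
qed

lemma strict_sorted_nth_gap:
  fixes xs :: "'a::linorder list"
  assumes "sorted_wrt (<) xs" and "Suc i < length xs" and "xs ! i < s" and "s < xs ! Suc i"
  shows "s \<notin> set xs"
proof
  assume "s \<in> set xs"
  then obtain j where j: "j < length xs" "xs ! j = s" by (auto simp: in_set_conv_nth)
  have sorted: "sorted xs" using assms(1) by (rule strict_sorted_imp_sorted)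
  show False
  proof (cases "j \<le> i")
    case True
    then show False using sorted_nth_mono[OF sorted True] assms j by simp
  next
    case False
    then show False using sorted_nth_mono[OF sorted, of "Suc i" j] assms j by simp
  qed
qed

lemma unit_partition_avoiding:
  assumes "finite S"
  obtains n a where "unit_partition n a" and "\<forall>i<n. S \<inter> {a i<..<a (Suc i)} = {}"
proof -
  define T where "T = {0, 1} \<union> (S \<inter> {0<..<1})"
  define xs where "xs = sorted_list_of_set T"
  define n where "n = length xs - 1"
  have "finite T" using assms by (simp add: T_def)
  then have set_xs: "set xs = T" and strict: "sorted_wrt (<) xs" and len: "length xs = card T"
    by (simp_all add: xs_def)
  have "card {0, 1::real} \<le> card T"
    using \<open>finite T\<close> by (intro card_mono) (auto simp: T_def)
  then have n: "Suc n = length xs" using len by (simp add: n_def)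
  have bounds: "xs ! i \<in> {0..1}" if "i \<le> n" for i
    using nth_mem[of i xs] that n set_xs by (auto simp: T_def)
  have sorted: "sorted xs" using strict by (rule strict_sorted_imp_sorted)
  have "0 \<in> set xs" "1 \<in> set xs" using set_xs by (auto simp: T_def)
  then obtain j0 j1 where j: "j0 < length xs" "xs ! j0 = 0" "j1 < length xs" "xs ! j1 = 1"
    by (auto simp: in_set_conv_nth)
  have "xs ! 0 = 0"
    using sorted_nth_mono[OF sorted, of 0 j0] bounds[of 0] j by auto
  moreover have "xs ! n = 1"
    using sorted_nth_mono[OF sorted, of j1 n] bounds[of n] j n by auto
  moreover have "\<forall>i<n. xs ! i < xs ! Suc i"
    using sorted_wrt_nth_less[OF strict] n by auto
  moreover have "\<forall>i<n. S \<inter> {xs ! i<..<xs ! Suc i} = {}"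
  proof (intro allI impI)
    fix i assume "i < n"
    have "s \<notin> set xs" if "s \<in> {xs ! i<..<xs ! Suc i}" for s
      using strict_sorted_nth_gap[OF strict, of i s] that \<open>i < n\<close> n by auto
    moreover have "{xs ! i<..<xs ! Suc i} \<subseteq> {0<..<1}"
      using bounds[of i] bounds[of "Suc i"] \<open>i < n\<close> by auto
    ultimately show "S \<inter> {xs ! i<..<xs ! Suc i} = {}" using set_xs unfolding T_def by blast
  qed
  ultimately show ?thesis using that[of n "(!) xs"] unfolding unit_partition_def by blast
qed

lemma IET_plus_rc_imp_translations:
  assumes "f \<in> IET_plus_rc"
  shows "\<forall>x\<in>IX. right_translation_at f x" and "finite {x\<in>IX. \<not> left_translation_at f x}"
proof -
  have rc: "\<forall>x\<in>IX. continuous (at_right x) f" and "piecewise_isometric False f"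
    using assms by (auto simp: IET_plus_rc_def IET_plus_def)
  then obtain n a where a: "unit_partition n a"
    and pc: "\<forall>i<n. \<exists>c. \<forall>y\<in>{a i<..<a (Suc i)}. f y = y + c"
    unfolding piecewise_isometric_iff_unit_partition by auto
  have piece: "\<exists>c. \<forall>y\<in>{a i..<a (Suc i)}. f y = y + c" if i: "i < n" for i
  proof -
    obtain c where c: "\<forall>y\<in>{a i<..<a (Suc i)}. f y = y + c" using pc i by blast
    have "a i < a (Suc i)" using a i by (simp add: unit_partition_def)
    then have "a i \<in> IX" using unit_partition_piece_subset[OF a i] by auto
    have "\<forall>\<^sub>F y in at_right (a i). f y = y + c"
      unfolding eventually_at_right_field using c \<open>a i < a (Suc i)\<close>
      by (intro exI[of _ "a (Suc i)"]) auto
    then have "f (a i) = a i + c"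
      by (rule right_continuous_eq_right_limit[OF rc[rule_format, OF \<open>a i \<in> IX\<close>]])
        (auto intro!: tendsto_eq_intros)
    with c have "\<forall>y\<in>{a i..<a (Suc i)}. f y = y + c" by (auto simp: order.order_iff_strict)
    then show ?thesis ..
  qed
  show "\<forall>x\<in>IX. right_translation_at f x"
  proof
    fix x assume "x \<in> IX"
    then obtain i where "i < n" and x: "x \<in> {a i..<a (Suc i)}"
      by (rule unit_partition_find_piece[OF a])
    then obtain c where "\<forall>y\<in>{a i..<a (Suc i)}. f y = y + c" using piece by blast
    with x show "right_translation_at f x" by (intro right_translation_atI[of x "a (Suc i)" f c]) auto
  qed
  have "{x\<in>IX. \<not> left_translation_at f x} \<subseteq> a ` {..n}"
  proof
    fix x assume x: "x \<in> {x\<in>IX. \<not> left_translation_at f x}"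
    then obtain i where i: "i < n" "x \<in> {a i..<a (Suc i)}"
      using unit_partition_find_piece[OF a] by blast
    then obtain c where "\<forall>y\<in>{a i..<a (Suc i)}. f y = y + c" using piece by blast
    then have "x \<le> a i" using x i left_translation_atI[of "a i" x f c] by force
    then show "x \<in> a ` {..n}" using i by auto
  qed
  then show "finite {x\<in>IX. \<not> left_translation_at f x}" by (rule finite_subset) simp
qed

lemma IET_plus_rc_if_translations:
  assumes "bij_betw f IX IX" and "\<forall>x. x \<notin> IX \<longrightarrow> f x = x"
    and "\<forall>x\<in>IX. right_translation_at f x" and "finite {x\<in>IX. \<not> left_translation_at f x}"
  shows "f \<in> IET_plus_rc"
proof -
  obtain n a where a: "unit_partition n a"
    and avoid: "\<forall>i<n. {x\<in>IX. \<not> left_translation_at f x} \<inter> {a i<..<a (Suc i)} = {}"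
    using unit_partition_avoiding[OF assms(4)] by blast
  have "\<exists>c. \<forall>y\<in>{a i<..<a (Suc i)}. f y = y + c" if "i < n" for i
  proof -
    have "{a i<..<a (Suc i)} \<subseteq> IX" using unit_partition_piece_subset[OF a that] by auto
    then have "\<forall>t\<in>{a i<..<a (Suc i)}. right_translation_at f t \<and> left_translation_at f t"
      using assms(3) avoid that by blast
    moreover have "a i < a (Suc i)" using a that by (simp add: unit_partition_def)
    ultimately show ?thesis by (metis translation_on_interval)
  qed
  then have "piecewise_isometric False f"
    unfolding piecewise_isometric_iff_unit_partition using a by blast
  moreover have "\<forall>x\<in>IX. continuous (at_right x) f"
    using assms(3) right_translation_at_imp_continuous by blast
  ultimately show ?thesis using assms(1,2) by (simp add: IET_plus_rc_def IET_plus_def)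
qed

lemma IET_plus_rc_comp:
  assumes "f \<in> IET_plus_rc" and "g \<in> IET_plus_rc"
  shows "f \<circ> g \<in> IET_plus_rc"
proof (rule IET_plus_rc_if_translations)
  have g: "bij_betw g IX IX" using assms(2) by (rule IET_plus_rcD)
  then have gIX: "g x \<in> IX" if "x \<in> IX" for x using that bij_betwE by blast
  show "bij_betw (f \<circ> g) IX IX" using bij_betw_trans[OF g IET_plus_rcD(1)[OF assms(1)]] .
  show "\<forall>x. x \<notin> IX \<longrightarrow> (f \<circ> g) x = x"
    using IET_plus_rcD(2)[OF assms(1)] IET_plus_rcD(2)[OF assms(2)] by simp
  show "\<forall>x\<in>IX. right_translation_at (f \<circ> g) x"
    using right_translation_at_comp IET_plus_rc_imp_translations(1)[OF assms(1)]
      IET_plus_rc_imp_translations(1)[OF assms(2)] gIX by blast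
  have "{x\<in>IX. \<not> left_translation_at (f \<circ> g) x} \<subseteq>
      {x\<in>IX. \<not> left_translation_at g x} \<union> (g -` {y\<in>IX. \<not> left_translation_at f y} \<inter> IX)"
    using left_translation_at_comp gIX by blast
  moreover have "finite (g -` {y\<in>IX. \<not> left_translation_at f y} \<inter> IX)"
    using finite_vimage_IntI[OF IET_plus_rc_imp_translations(2)[OF assms(1)] bij_betw_imp_inj_on[OF g]] .
  ultimately show "finite {x\<in>IX. \<not> left_translation_at (f \<circ> g) x}"
    using IET_plus_rc_imp_translations(2)[OF assms(2)] by (simp add: finite_subset)
qed

lemma IET_plus_rc_inv:
  assumes "g \<in> IET_plus_rc"
  shows "inv g \<in> IET_plus_rc"
proof (rule IET_plus_rc_if_translations)
  note g = IET_plus_rcD[OF assms]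
  have "inj g" using bij_if_bij_betw_IX[OF g] by (rule bij_is_inj)
  show "bij_betw (inv g) IX IX" and "\<forall>x. x \<notin> IX \<longrightarrow> inv g x = x"
    using inv_bij_betw_IX[OF g] by blast+
  have preimage: "\<exists>x\<in>IX. y = g x" if "y \<in> IX" for y
    using g(1) that by (auto simp: bij_betw_def)
  show "\<forall>y\<in>IX. right_translation_at (inv g) y"
    using preimage right_translation_at_inv[OF \<open>inj g\<close>] IET_plus_rc_imp_translations(1)[OF assms]
    by blast
  have "{y\<in>IX. \<not> left_translation_at (inv g) y} \<subseteq> g ` {x\<in>IX. \<not> left_translation_at g x}"
    using preimage left_translation_at_inv[OF \<open>inj g\<close>] by blast
  then show "finite {y\<in>IX. \<not> left_translation_at (inv g) y}"
    using IET_plus_rc_imp_translations(2)[OF assms] finite_surj by blast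
qed

lemma IET_plus_rc_conj_image:
  assumes "g \<in> IET_plus_rc"
  shows "(\<lambda>h. g \<circ> h \<circ> inv g) ` IET_plus_rc = IET_plus_rc"
proof
  show "(\<lambda>h. g \<circ> h \<circ> inv g) ` IET_plus_rc \<subseteq> IET_plus_rc"
    using assms IET_plus_rc_comp IET_plus_rc_inv by blast
  have "surj g" using bij_if_bij_betw_IX[OF IET_plus_rcD[OF assms]] by (rule bij_is_surj)
  show "IET_plus_rc \<subseteq> (\<lambda>h. g \<circ> h \<circ> inv g) ` IET_plus_rc"
  proof
    fix h assume "h \<in> IET_plus_rc"
    then have "inv g \<circ> h \<circ> g \<in> IET_plus_rc"
      using assms IET_plus_rc_comp IET_plus_rc_inv by blast
    moreover have "h = g \<circ> (inv g \<circ> h \<circ> g) \<circ> inv g"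
      using \<open>surj g\<close> by (simp add: fun_eq_iff surj_f_inv_f)
    ultimately show "h \<in> (\<lambda>h. g \<circ> h \<circ> inv g) ` IET_plus_rc" by blast
  qed
qed

lemma IET_plus_rc_subset_IET_bowtie: "IET_plus_rc \<subseteq> IET_bowtie"
  unfolding IET_plus_rc_def IET_plus_def IET_bowtie_def piecewise_isometric_def by blast

definition interval_swap :: "real \<Rightarrow> real \<Rightarrow> real \<Rightarrow> real" where
  "interval_swap p L y =
     (if y \<in> {p..<p+L} then y + L else if y \<in> {p+L..<p+2*L} then y - L else y)"

lemma interval_swap_in_IET_plus_rc:
  assumes "0 \<le> p" and "0 < L" and "p + 2 * L \<le> 1"
  shows "interval_swap p L \<in> IET_plus_rc"
proof (rule IET_plus_rc_if_translations)
  let ?s = "interval_swap p L"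
  have involution: "?s (?s y) = y" for y
    using assms(2) by (auto simp: interval_swap_def)
  have maps: "?s y \<in> IX" if "y \<in> IX" for y
    using that assms by (auto simp: interval_swap_def IX_def)
  show "bij_betw ?s IX IX"
    by (rule bij_betw_byWitness[where f' = ?s]) (use involution maps in auto)
  show "\<forall>x. x \<notin> IX \<longrightarrow> ?s x = x"
    using assms by (auto simp: interval_swap_def IX_def)
  have "right_translation_at ?s x" for x
  proof -
    consider "x < p" | "x \<in> {p..<p+L}" | "x \<in> {p+L..<p+2*L}" | "p + 2*L \<le> x" by force
    then show ?thesis
    proof cases
      case 1
      then show ?thesis by (intro right_translation_atI[of x p _ 0]) (auto simp: interval_swap_def)
    next
      case 2
      then show ?thesis by (intro right_translation_atI[of x "p+L" _ L]) (auto simp: interval_swap_def)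
    next
      case 3
      then show ?thesis
        by (intro right_translation_atI[of x "p+2*L" _ "-L"]) (auto simp: interval_swap_def)
    next
      case 4
      then show ?thesis
        by (intro right_translation_atI[of x "x+1" _ 0]) (auto simp: interval_swap_def)
    qed
  qed
  then show "\<forall>x\<in>IX. right_translation_at ?s x" by blast
  have "left_translation_at ?s x" if x: "x \<notin> {p, p+L, p+2*L}" for x
  proof -
    consider "x < p" | "x \<in> {p<..<p+L}" | "x \<in> {p+L<..<p+2*L}" | "p + 2*L < x"
      using x by fastforce
    then show ?thesis
    proof cases
      case 1
      then show ?thesis by (intro left_translation_atI[of "x-1" x _ 0]) (auto simp: interval_swap_def)
    next
      case 2
      then show ?thesis by (intro left_translation_atI[of p x _ L]) (auto simp: interval_swap_def)
    next
      case 3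
      then show ?thesis
        by (intro left_translation_atI[of "p+L" x _ "-L"]) (auto simp: interval_swap_def)
    next
      case 4
      then show ?thesis
        by (intro left_translation_atI[of "p+2*L" x _ 0]) (auto simp: interval_swap_def)
    qed
  qed
  then have "{x\<in>IX. \<not> left_translation_at ?s x} \<subseteq> {p, p+L, p+2*L}" by blast
  then show "finite {x\<in>IX. \<not> left_translation_at ?s x}" by (rule finite_subset) simp
qed

lemma normalizer_conj_inv_mem:
  assumes "g \<in> normalizer G H" and "inj g" and "h \<in> H"
  shows "inv g \<circ> h \<circ> g \<in> H"
proof -
  obtain h' where "h' \<in> H" and "h = g \<circ> h' \<circ> inv g"
    using assms(1,3) unfolding normalizer_def by blast
  moreover from this(2) have "inv g \<circ> h \<circ> g = h'"
    using assms(2) by (simp add: fun_eq_iff)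
  ultimately show ?thesis by simp
qed

lemma normalizer_IET_bowtie_bij:
  assumes "g \<in> normalizer IET_bowtie H"
  shows "bij_betw g IX IX" and "bij g"
  using assms bij_if_bij_betw_IX by (auto simp: normalizer_def IET_bowtie_def)

lemma normalizer_IET_bowtie_mem_IX:
  assumes "g \<in> normalizer IET_bowtie H" and "x \<in> IX"
  shows "0 \<le> g x" and "g x < 1"
  using normalizer_IET_bowtie_bij(1)[OF assms(1)] assms(2) by (auto simp: bij_betw_def IX_def)

lemma normalizer_frequently_right_near:
  assumes g: "g \<in> normalizer IET_bowtie IET_plus_rc" and x: "x \<in> IX"
    and "0 < e" and "g x + e \<le> 1"
  shows "\<exists>\<^sub>F y in at_right x. g y \<in> {g x..<g x + e}"
proof (rule ccontr)
  assume "\<not> ?thesis"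
  then have far: "\<forall>\<^sub>F y in at_right x. g y \<notin> {g x..<g x + e}"
    by (simp add: not_frequently)
  have "inj g" and "surj g" using normalizer_IET_bowtie_bij(2)[OF g] by (auto dest: bij_is_inj bij_is_surj)
  define s where "s = interval_swap (g x) (e / 2)"
  have "s \<in> IET_plus_rc"
    unfolding s_def using normalizer_IET_bowtie_mem_IX(1)[OF g x] \<open>0 < e\<close> \<open>g x + e \<le> 1\<close>
    by (intro interval_swap_in_IET_plus_rc) auto
  then have "inv g \<circ> s \<circ> g \<in> IET_plus_rc"
    by (rule normalizer_conj_inv_mem[OF g \<open>inj g\<close>])
  then have cont: "continuous (at_right x) (inv g \<circ> s \<circ> g)"
    using x by (simp add: IET_plus_rc_def)
  have "\<forall>\<^sub>F y in at_right x. (inv g \<circ> s \<circ> g) y = y"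
    using far by (rule eventually_mono)
      (use \<open>0 < e\<close> \<open>inj g\<close> in \<open>auto simp: s_def interval_swap_def\<close>)
  then have "(inv g \<circ> s \<circ> g) x = x"
    by (rule right_continuous_eq_right_limit[where h="\<lambda>y. y", OF cont _ tendsto_ident_at])
  moreover have "s (g x) = g x + e / 2" using \<open>0 < e\<close> by (simp add: s_def interval_swap_def)
  ultimately have "g x = g x + e / 2" using surj_f_inv_f[OF \<open>surj g\<close>] by (metis comp_apply)
  then show False using \<open>0 < e\<close> by simp
qed

lemma normalizer_right_limit_eq:
  assumes g: "g \<in> normalizer IET_bowtie IET_plus_rc" and x: "x \<in> IX"
    and lim: "(g \<longlongrightarrow> z) (at_right x)"
  shows "z = g x"
proof (rule ccontr)
  assume "z \<noteq> g x"
  have "g x < 1" using g x by (rule normalizer_IET_bowtie_mem_IX)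
  consider "z < g x" | "g x < z" using \<open>z \<noteq> g x\<close> by linarith
  then obtain e where "0 < e" "g x + e \<le> 1"
    and far: "\<forall>\<^sub>F y in at_right x. g y \<notin> {g x..<g x + e}"
  proof cases
    case 1
    have "\<forall>\<^sub>F y in at_right x. g y < g x" using order_tendstoD(2)[OF lim 1] .
    then have "\<forall>\<^sub>F y in at_right x. g y \<notin> {g x..<g x + (1 - g x)}"
      by (rule eventually_mono) simp
    then show ?thesis using that[of "1 - g x"] \<open>g x < 1\<close> by simp
  next
    case 2
    define e where "e = min ((z - g x) / 2) (1 - g x)"
    have e: "0 < e" "g x + e \<le> 1" "g x + e < z"
      using 2 \<open>g x < 1\<close> by (auto simp: e_def min_def field_simps)
    have "\<forall>\<^sub>F y in at_right x. g x + e < g y" using order_tendstoD(1)[OF lim e(3)] .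
    then have "\<forall>\<^sub>F y in at_right x. g y \<notin> {g x..<g x + e}" by (rule eventually_mono) simp
    then show ?thesis using that e(1,2) by blast
  qed
  then show False
    using normalizer_frequently_right_near[OF g x \<open>0 < e\<close> \<open>g x + e \<le> 1\<close>]
    by (simp add: frequently_def)
qed

lemma normalizer_right_translation_at:
  assumes g: "g \<in> normalizer IET_bowtie IET_plus_rc" and x: "x \<in> IX"
  shows "right_translation_at g x"
proof -
  have "piecewise_isometric True g" using g by (simp add: normalizer_def IET_bowtie_def)
  then obtain n a where a: "unit_partition n a"
    and pc: "\<forall>i<n. \<exists>c. (\<forall>y\<in>{a i<..<a (Suc i)}. g y = y + c) \<or>
                       (\<forall>y\<in>{a i<..<a (Suc i)}. g y = - y + c)"
    unfolding piecewise_isometric_iff_unit_partition by auto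
  obtain i where i: "i < n" "x \<in> {a i..<a (Suc i)}" using unit_partition_find_piece[OF a x] .
  then have near: "\<forall>\<^sub>F y in at_right x. y \<in> {a i<..<a (Suc i)}"
    unfolding eventually_at_right_field by (intro exI[of _ "a (Suc i)"]) auto
  obtain c where "(\<forall>y\<in>{a i<..<a (Suc i)}. g y = y + c) \<or>
                 (\<forall>y\<in>{a i<..<a (Suc i)}. g y = - y + c)"
    using pc i(1) by blast
  then show ?thesis
  proof
    assume tr: "\<forall>y\<in>{a i<..<a (Suc i)}. g y = y + c"
    have "\<forall>\<^sub>F y in at_right x. g y = y + c" using near by (rule eventually_mono) (use tr in blast)
    then have "(g \<longlongrightarrow> x + c) (at_right x)"
      by (subst tendsto_cong) (auto intro!: tendsto_eq_intros)
    then have "g x = x + c" using normalizer_right_limit_eq[OF g x] by simp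
    with tr i show ?thesis
      by (intro right_translation_atI[of x "a (Suc i)" g c]) (auto simp: order.order_iff_strict)
  next
    assume fl: "\<forall>y\<in>{a i<..<a (Suc i)}. g y = - y + c"
    have ev: "\<forall>\<^sub>F y in at_right x. g y = - y + c"
      using near by (rule eventually_mono) (use fl in blast)
    then have "(g \<longlongrightarrow> - x + c) (at_right x)"
      by (subst tendsto_cong) (auto intro!: tendsto_eq_intros)
    then have gx: "g x = - x + c" using normalizer_right_limit_eq[OF g x] by simp
    have "g x < 1" using g x by (rule normalizer_IET_bowtie_mem_IX)
    have "\<forall>\<^sub>F y in at_right x. g y \<notin> {g x..<g x + (1 - g x)}"
      using ev eventually_at_right_less[of x] by eventually_elim (simp add: gx)
    then show ?thesis
      using normalizer_frequently_right_near[OF g x, of "1 - g x"] \<open>g x < 1\<close>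
      by (simp add: frequently_def)
  qed
qed

lemma IET_plus_rc_if_right_translations:
  assumes "g \<in> IET_bowtie" and rt: "\<forall>x\<in>IX. right_translation_at g x"
  shows "g \<in> IET_plus_rc"
proof -
  obtain n a where a: "unit_partition n a"
    and pc: "\<forall>i<n. \<exists>c. (\<forall>y\<in>{a i<..<a (Suc i)}. g y = y + c) \<or>
                       (\<forall>y\<in>{a i<..<a (Suc i)}. g y = - y + c)"
    using assms(1) unfolding IET_bowtie_def piecewise_isometric_iff_unit_partition by auto
  have "\<exists>c. \<forall>y\<in>{a i<..<a (Suc i)}. g y = y + c" if i: "i < n" for i
  proof -
    obtain c where c: "(\<forall>y\<in>{a i<..<a (Suc i)}. g y = y + c) \<or>
                       (\<forall>y\<in>{a i<..<a (Suc i)}. g y = - y + c)"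
      using pc i by blast
    define m where "m = (a i + a (Suc i)) / 2"
    have "a i < a (Suc i)" using a i by (simp add: unit_partition_def)
    then have m: "m \<in> {a i<..<a (Suc i)}" by (simp add: m_def)
    then have "m \<in> IX" using unit_partition_piece_subset[OF a i] by auto
    then have "right_translation_at g m" using rt by blast
    then have ev: "\<forall>\<^sub>F y in at_right m. g y = y + (g m - m)"
      by (rule right_translation_at_eventually)
    have near: "\<forall>\<^sub>F y in at_right m. y \<in> {a i<..<a (Suc i)}"
      using m unfolding eventually_at_right_field by (intro exI[of _ "a (Suc i)"]) auto
    have "\<not> (\<forall>y\<in>{a i<..<a (Suc i)}. g y = - y + c)"
    proof
      assume fl: "\<forall>y\<in>{a i<..<a (Suc i)}. g y = - y + c"
      have "\<forall>\<^sub>F y in at_right m. False"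
        using ev near eventually_at_right_less[of m] by eventually_elim (use fl m in auto)
      then show False by simp
    qed
    then show ?thesis using c by blast
  qed
  then have "piecewise_isometric False g"
    unfolding piecewise_isometric_iff_unit_partition using a by blast
  moreover have "\<forall>x\<in>IX. continuous (at_right x) g"
    using rt right_translation_at_imp_continuous by blast
  ultimately show ?thesis using assms(1) by (simp add: IET_bowtie_def IET_plus_rc_def IET_plus_def)
qed

theorem proposition5p3:
  shows "normalizer IET_bowtie IET_plus_rc = IET_plus_rc"
proof
  show "normalizer IET_bowtie IET_plus_rc \<subseteq> IET_plus_rc"
  proof
    fix g assume g: "g \<in> normalizer IET_bowtie IET_plus_rc"
    then have "g \<in> IET_bowtie" by (simp add: normalizer_def)
    moreover have "\<forall>x\<in>IX. right_translation_at g x"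
      using normalizer_right_translation_at[OF g] by blast
    ultimately show "g \<in> IET_plus_rc" by (rule IET_plus_rc_if_right_translations)
  qed
  show "IET_plus_rc \<subseteq> normalizer IET_bowtie IET_plus_rc"
    using IET_plus_rc_subset_IET_bowtie IET_plus_rc_conj_image by (auto simp: normalizer_def)
qed

end
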